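(* Let $V\in L^1_{\mathrm{loc}}(\mathbb{R})$ be complex-valued and periodic of period $\pi$, and suppose $\overline{V(-x)}=V(x)$ for all $x\in\mathbb{R}$ (equivalently, $\overline{V(\pi-x)}=V(x)$ for all $x\in[0,\pi]$). Then for every $j\in\mathbb{N}$, $k\in\mathbb{N}_0$ and $x_0\in[0,\pi]$, $$\overline{\mu_j(\pi-x_0)}=\mu_j(x_0)\quad\text{and}\quad \overline{\nu_k(\pi-x_0)}=\nu_k(x_0).$$
   Context: For $\lambda\in\mathbb{C}$ and $x_0\in\mathbb{R}$, let $c(\lambda,x_0,\cdot)$ and $s(\lambda,x_0,\cdot)$ be the solutions of $-\psi''+V\psi=\lambda\psi$ on $\mathbb{R}$ with $c(\lambda,x_0,x_0)=1$, $c'(\lambda,x_0,x_0)=0$, $s(\lambda,x_0,x_0)=0$, $s'(\lambda,x_0,x_0)=1$ ($'$ = derivative in the last variable). The Dirichlet eigenvalues $\mu_j(x_0)$, $j\in\mathbb{N}$, are the zeros of $\lambda\mapsto s(\lambda,x_0,x_0+\pi)$ (eigenvalues of $-d^2/dx^2+V$ on $[x_0,x_0+\pi]$ with Dirichlet conditions at both ends), and the Neumann eigenvalues $\nu_k(x_0)$, $k\in\mathbb{N}_0$, are the zeros of $\lambda\mapsto c'(\lambda,x_0,x_0+\pi)$ (Neumann conditions at both ends); each sequence is listed with multiplicity and numbered in order of non-decreasing modulus.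
   Formalization: For every numbering of the Dirichlet (resp. Neumann) eigenvalues at $x_0$ by non-decreasing modulus, some such numbering at $\pi-x_0$ is its termwise complex conjugate; no single numbering $\mu_j$, $\nu_k$ is fixed. The statement above fails without it. *)

theory Defs
  imports "HOL-Complex_Analysis.Complex_Analysis"
begin

text \<open>psi (with derivative psi') solves -psi'' + V psi = lam psi on the real line in the
  Caratheodory sense: psi is differentiable with derivative psi', and psi' is absolutely
  continuous with psi'' = (V - lam) psi almost everywhere, expressed in integral form.\<close>
definition is_solution ::
  "(real \<Rightarrow> complex) \<Rightarrow> complex \<Rightarrow> (real \<Rightarrow> complex) \<Rightarrow> (real \<Rightarrow> complex) \<Rightarrow> bool" where
  "is_solution V lam psi psi' \<longleftrightarrow>
     (\<forall>x. (psi has_vector_derivative psi' x) (at x)) \<and>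
     (\<forall>a b. a \<le> b \<longrightarrow> ((\<lambda>t. (V t - lam) * psi t) has_integral (psi' b - psi' a)) {a..b})"

definition sol_c :: "(real \<Rightarrow> complex) \<Rightarrow> complex \<Rightarrow> real \<Rightarrow> real \<Rightarrow> complex" where
  "sol_c V lam x0 = (THE psi. \<exists>psi'. is_solution V lam psi psi' \<and> psi x0 = 1 \<and> psi' x0 = 0)"

definition sol_s :: "(real \<Rightarrow> complex) \<Rightarrow> complex \<Rightarrow> real \<Rightarrow> real \<Rightarrow> complex" where
  "sol_s V lam x0 = (THE psi. \<exists>psi'. is_solution V lam psi psi' \<and> psi x0 = 0 \<and> psi' x0 = 1)"

definition sol_c' :: "(real \<Rightarrow> complex) \<Rightarrow> complex \<Rightarrow> real \<Rightarrow> real \<Rightarrow> complex" where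
  "sol_c' V lam x0 x = vector_derivative (sol_c V lam x0) (at x)"

definition zero_enum :: "(complex \<Rightarrow> complex) \<Rightarrow> nat \<Rightarrow> (nat \<Rightarrow> complex) \<Rightarrow> bool" where
  "zero_enum f n0 mu \<longleftrightarrow>
     (\<forall>i j. n0 \<le> i \<longrightarrow> i \<le> j \<longrightarrow> cmod (mu i) \<le> cmod (mu j)) \<and>
     (\<forall>z. card {j. n0 \<le> j \<and> mu j = z} = (if f z = 0 then nat (zorder f z) else 0))"

definition dirichlet_enum :: "(real \<Rightarrow> complex) \<Rightarrow> real \<Rightarrow> (nat \<Rightarrow> complex) \<Rightarrow> bool" where
  "dirichlet_enum V x0 mu \<longleftrightarrow> zero_enum (\<lambda>lam. sol_s V lam x0 (x0 + pi)) 1 mu"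

definition neumann_enum :: "(real \<Rightarrow> complex) \<Rightarrow> real \<Rightarrow> (nat \<Rightarrow> complex) \<Rightarrow> bool" where
  "neumann_enum V x0 nu \<longleftrightarrow> zero_enum (\<lambda>lam. sol_c' V lam x0 (x0 + pi)) 0 nu"

end

theory Submission
  imports Defs
begin

(* Since V is conjugate-symmetric about pi (by the symmetry about 0 and periodicity), reflecting
   a solution about 2 pi and conjugating it turns a solution for lam into one for cnj lam.
   Combined with the antisymmetry s(lam, a, b) = - s(lam, b, a), c'(lam, a, b) = - c'(lam, b, a)
   that comes from the constancy of the Wronskian, this gives
   s(lam, pi - x0, 2 pi - x0) = cnj (s(cnj lam, x0, x0 + pi)) and likewise for c'. Conjugation
   preserves the order of zeros, so conjugating an enumeration of the eigenvalues at x0 enumerates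
   those at pi - x0.

   Since V is only locally integrable, the solutions are Caratheodory ones. They exist by Picard
   iteration, the n-th term being bounded by Omega^n / n! with Omega the integral of
   1 + |lam| + |V|. The Wronskian of two solutions is constant because its increment over an
   interval is O(Omega^2) there, which forces constancy without any pointwise second derivative;
   uniqueness of solutions follows. *)

section \<open>Zero orders under conjugation\<close>

lemma zorder_cnj: "zorder (\<lambda>w. cnj (f (cnj w))) z = zorder f (cnj z)"
proof -
  \<comment> \<open>the predicate of which \<open>zorder\<close> is the unique solution; \<open>f\<close> need not be holomorphic\<close>
  define has_order where
    "has_order g z n \<longleftrightarrow> (\<exists>h r. r > 0 \<and> h holomorphic_on cball z r \<and> h z \<noteq> 0 \<and>
        (\<forall>w\<in>cball z r - {z}. g w = h w * (w - z) powi n \<and> h w \<noteq> 0))"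
    for g :: "complex \<Rightarrow> complex" and z n
  have reflect: "has_order (\<lambda>w. cnj (g (cnj w))) z n" if g: "has_order g (cnj z) n" for g z n
  proof -
    obtain h r where r: "r > 0" and h: "h holomorphic_on cball (cnj z) r" and hz: "h (cnj z) \<noteq> 0"
      and g_eq: "\<And>w. w \<in> cball (cnj z) r - {cnj z} \<Longrightarrow> g w = h w * (w - cnj z) powi n \<and> h w \<noteq> 0"
      using g unfolding has_order_def by blast
    have cnj_ball: "cnj ` ball z r \<subseteq> cball (cnj z) r"
      by (auto simp: dist_norm complex_cnj_diff[symmetric] simp del: complex_cnj_diff)
    have "cnj \<circ> h \<circ> cnj holomorphic_on ball z r"
      by (rule holomorphic_on_compose_cnj_cnj) (use h cnj_ball holomorphic_on_subset in auto)
    moreover have "cball z (r/2) \<subseteq> ball z r"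
      using r by (simp add: subset_eq)
    ultimately have "(\<lambda>w. cnj (h (cnj w))) holomorphic_on cball z (r/2)"
      by (auto simp: o_def intro: holomorphic_on_subset)
    moreover have "cnj (g (cnj w)) = cnj (h (cnj w)) * (w - z) powi n \<and> cnj (h (cnj w)) \<noteq> 0"
      if "w \<in> cball z (r/2) - {z}" for w
    proof -
      have "cnj w \<in> cball (cnj z) r - {cnj z}"
        using that r by (auto simp: dist_norm complex_cnj_diff[symmetric] simp del: complex_cnj_diff)
      then show ?thesis
        using g_eq by (simp add: complex_cnj_diff[symmetric] del: complex_cnj_diff)
    qed
    ultimately show ?thesis
      unfolding has_order_def using r hz by (intro exI[of _ "\<lambda>w. cnj (h (cnj w))"] exI[of _ "r/2"]) auto
  qed
  have "has_order (\<lambda>w. cnj (f (cnj w))) z n \<longleftrightarrow> has_order f (cnj z) n" for n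
    using reflect[of f z n] reflect[of "\<lambda>w. cnj (f (cnj w))" "cnj z" n] by auto
  then show ?thesis
    unfolding zorder_def has_order_def[symmetric] by simp
qed

lemma zero_enum_cnj:
  assumes "zero_enum f n0 mu"
  shows "zero_enum (\<lambda>z. cnj (f (cnj z))) n0 (\<lambda>j. cnj (mu j))"
proof -
  have "{j. n0 \<le> j \<and> cnj (mu j) = z} = {j. n0 \<le> j \<and> mu j = cnj z}" for z
    by auto
  then show ?thesis
    using assms unfolding zero_enum_def zorder_cnj by simp
qed

section \<open>Functions with quadratically small increments\<close>

lemma increment_le_if_quadratic_increments:
  fixes h W :: "real \<Rightarrow> real" and N :: nat
  assumes "a \<le> b" and W: "continuous_on {a..b} W" "mono_on {a..b} W"
    and inc: "\<And>x y. a \<le> x \<Longrightarrow> x \<le> y \<Longrightarrow> y \<le> b \<Longrightarrow> h y - h x \<le> C * (W y - W x)^2"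
    and "C \<ge> 0" and "N > 0"
  shows "h b - h a \<le> C * (W b - W a)^2 / N"
proof (cases "W a = W b")
  case True
  then show ?thesis using inc[of a b] \<open>a \<le> b\<close> by simp
next
  case False
  define D where "D = W b - W a"
  have "D > 0"
    using False W(2) \<open>a \<le> b\<close> unfolding D_def mono_on_def by fastforce
  define T where "T i = W a + real i * D / real N" for i
  have "\<exists>t. a \<le> t \<and> t \<le> b \<and> W t = T i" if "i \<le> N" for i
  proof (rule IVT'[OF _ _ \<open>a \<le> b\<close> W(1)])
    have "real i * D \<le> real N * D"
      using that \<open>D > 0\<close> by (intro mult_right_mono) auto
    then have "real i * D / N \<le> D"
      using \<open>N > 0\<close> by (simp add: divide_le_eq mult.commute)
    then show "T i \<le> W b"
      by (simp add: T_def D_def)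
  qed (use \<open>D > 0\<close> in \<open>simp add: T_def\<close>)
  then obtain t where t: "\<And>i. i \<le> N \<Longrightarrow> a \<le> t i \<and> t i \<le> b \<and> W (t i) = T i"
    by metis
  have step: "h (t (Suc i)) - h (t i) \<le> C * (D / N)^2" if "Suc i \<le> N" for i
  proof -
    have "T i < T (Suc i)"
      using \<open>D > 0\<close> \<open>N > 0\<close> by (simp add: T_def field_simps)
    then have "t i \<le> t (Suc i)"
      using W(2) t[of i] t[of "Suc i"] that unfolding mono_on_def
      by (metis Suc_leD atLeastAtMost_iff nle_le not_le)
    then have "h (t (Suc i)) - h (t i) \<le> C * (W (t (Suc i)) - W (t i))^2"
      using inc[of "t i" "t (Suc i)"] t[of i] t[of "Suc i"] that by auto
    also have "W (t (Suc i)) - W (t i) = D / N"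
      using t[of i] t[of "Suc i"] that by (simp add: T_def field_simps)
    finally show ?thesis .
  qed
  have "h (t N) - h (t 0) = (\<Sum>i<N. h (t (Suc i)) - h (t i))"
    using sum_lessThan_telescope[of "\<lambda>i. h (t i)" N] by simp
  also have "\<dots> \<le> (\<Sum>i<N. C * (D / N)^2)"
    by (rule sum_mono) (use step in auto)
  also have "\<dots> = C * D^2 / N"
    using \<open>N > 0\<close> by (simp add: power2_eq_square field_simps)
  finally have "h (t N) - h (t 0) \<le> C * D^2 / N" .
  moreover have "h b - h (t N) \<le> 0" "h (t 0) - h a \<le> 0"
    using inc[of "t N" b] inc[of a "t 0"] t[of N] t[of 0] \<open>N > 0\<close> by (simp_all add: T_def D_def)
  ultimately show ?thesis
    unfolding D_def by simp
qed

lemma le_if_quadratic_increments: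
  fixes h W :: "real \<Rightarrow> real"
  assumes "a \<le> b" and W: "continuous_on {a..b} W" "mono_on {a..b} W"
    and inc: "\<And>x y. a \<le> x \<Longrightarrow> x \<le> y \<Longrightarrow> y \<le> b \<Longrightarrow> h y - h x \<le> C * (W y - W x)^2"
  shows "h b \<le> h a"
proof (rule ccontr)
  assume "\<not> h b \<le> h a"
  define C' where "C' = max C 0"
  have inc': "h y - h x \<le> C' * (W y - W x)^2" if "a \<le> x" "x \<le> y" "y \<le> b" for x y
    using inc[OF that] mult_right_mono[of C C' "(W y - W x)^2"] unfolding C'_def by simp
  obtain N :: nat where N: "N > C' * (W b - W a)^2 / (h b - h a)"
    using reals_Archimedean2 by blast
  moreover have "C' * (W b - W a)^2 / (h b - h a) \<ge> 0"
    using \<open>\<not> h b \<le> h a\<close> unfolding C'_def by simp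
  ultimately have "N > 0"
    by linarith
  have "h b - h a \<le> C' * (W b - W a)^2 / N"
    by (rule increment_le_if_quadratic_increments[OF \<open>a \<le> b\<close> W inc']) (use \<open>N > 0\<close> in \<open>auto simp: C'_def\<close>)
  also have "\<dots> < h b - h a"
    using N \<open>\<not> h b \<le> h a\<close> \<open>N > 0\<close> by (simp add: divide_less_eq field_simps)
  finally show False by simp
qed

lemma constant_if_quadratic_increments:
  fixes h :: "real \<Rightarrow> 'a::real_normed_vector" and W :: "real \<Rightarrow> real"
  assumes "a \<le> b" and W: "continuous_on {a..b} W" "mono_on {a..b} W"
    and inc: "\<And>x y. a \<le> x \<Longrightarrow> x \<le> y \<Longrightarrow> y \<le> b \<Longrightarrow> norm (h y - h x) \<le> C * (W y - W x)^2"
  shows "h b = h a"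
proof -
  have "norm (h y - h a) - norm (h x - h a) \<le> C * (W y - W x)^2"
    if "a \<le> x" "x \<le> y" "y \<le> b" for x y
    using inc[OF that] norm_triangle_ineq2[of "h y - h a" "h x - h a"] by simp
  from le_if_quadratic_increments[OF \<open>a \<le> b\<close> W this] show ?thesis
    by simp
qed

lemma power_diff_le_Lipschitz:
  fixes s t R :: "'a::linordered_idom"
  assumes "0 \<le> s" "s \<le> t" "t \<le> R"
  shows "t^n - s^n \<le> of_nat n * R^(n-1) * (t - s)"
proof (cases n)
  case (Suc m)
  have "t^n - s^n = (t - s) * (\<Sum>p<Suc m. t^p * s^(m - p))"
    using diff_power_eq_sum[of t m s] Suc by simp
  also have "\<dots> \<le> (t - s) * (\<Sum>p<Suc m. R^m)"
  proof (rule mult_left_mono[OF sum_mono])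
    fix p assume "p \<in> {..<Suc m}"
    then have "R^p * R^(m-p) = R^m"
      by (simp add: power_add[symmetric])
    moreover have "t^p * s^(m-p) \<le> R^p * R^(m-p)"
      using assms by (intro mult_mono power_mono) auto
    ultimately show "t^p * s^(m-p) \<le> R^m"
      by simp
  qed (use assms in auto)
  also have "\<dots> = of_nat n * R^(n-1) * (t - s)"
    using Suc by simp
  finally show ?thesis .
qed simp

lemma mult_diff_le_power_Suc_diff:
  fixes s t :: "'a::linordered_idom"
  assumes "0 \<le> s" "s \<le> t"
  shows "of_nat (Suc n) * s^n * (t - s) \<le> t^Suc n - s^Suc n"
proof -
  have "of_nat (Suc n) * s^n * (t - s) = (t - s) * (\<Sum>p<Suc n. s^n)"
    by simp
  also have "\<dots> \<le> (t - s) * (\<Sum>p<Suc n. t^p * s^(n - p))"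
  proof (rule mult_left_mono[OF sum_mono])
    fix p assume "p \<in> {..<Suc n}"
    then have "s^n = s^p * s^(n-p)"
      by (simp add: power_add[symmetric])
    also have "\<dots> \<le> t^p * s^(n-p)"
      using assms by (intro mult_right_mono power_mono) auto
    finally show "s^n \<le> t^p * s^(n-p)" .
  qed (use assms in auto)
  also have "\<dots> = t^Suc n - s^Suc n"
    using diff_power_eq_sum[of t n s] by simp
  finally show ?thesis .
qed

lemma absolutely_integrable_continuous_mult:
  fixes f g :: "real \<Rightarrow> 'a::{euclidean_space,real_algebra}"
  assumes "continuous_on {a..b} g" "f absolutely_integrable_on {a..b}"
  shows "(\<lambda>t. g t * f t) absolutely_integrable_on {a..b}"
proof (rule absolutely_integrable_bounded_measurable_product[where h="(*)", OF bilinear_times])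
  show "g \<in> borel_measurable (lebesgue_on {a..b})"
    by (rule continuous_imp_measurable_on_sets_lebesgue) (use assms in auto)
  show "bounded (g ` {a..b})"
    by (rule compact_imp_bounded, rule compact_continuous_image) (use assms in auto)
qed (use assms in auto)

text \<open>The chain rule \<open>(W^(n+1))' = (n+1) W' W^n\<close> is not available for an indefinite integral \<open>W\<close>
  of a merely integrable function; instead the increments of the difference of both sides are
  shown to be quadratically small in those of \<open>W\<close>.\<close>

lemma integral_mult_power_indefinite_integral_le:
  fixes a :: "real \<Rightarrow> real"
  assumes "u \<le> x" and a: "a integrable_on {u..x}" "\<And>t. 0 \<le> a t"
  shows "integral {u..x} (\<lambda>t. a t * integral {u..t} a ^ n) \<le> integral {u..x} a ^ Suc n / Suc n"
proof -
  define W where "W t = integral {u..t} a" for t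
  have W_cont: "continuous_on {u..x} W"
    unfolding W_def by (rule indefinite_integral_continuous_1[OF a(1)])
  have a_int: "a integrable_on {s..t}" if "u \<le> s" "t \<le> x" for s t
    by (rule integrable_subinterval_real[OF a(1)]) (use that in auto)
  have W_diff: "W t - W s = integral {s..t} a" if "u \<le> s" "s \<le> t" "t \<le> x" for s t
    using Henstock_Kurzweil_Integration.integral_combine[of u s t a] a_int[of u t] that
    unfolding W_def by (simp add: algebra_simps)
  have W_mono: "W s \<le> W t" if "u \<le> s" "s \<le> t" "t \<le> x" for s t
    using W_diff[OF that] Henstock_Kurzweil_Integration.integral_nonneg[OF a_int[of s t]] a that by auto
  have W_nonneg: "0 \<le> W t" if "u \<le> t" "t \<le> x" for t
    using W_mono[of u t] that unfolding W_def by simp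
  have "(\<lambda>t. W t ^ n * a t) absolutely_integrable_on {u..x}"
    by (rule absolutely_integrable_continuous_mult)
      (use W_cont a in \<open>auto intro!: continuous_intros nonnegative_absolutely_integrable_1\<close>)
  then have "(\<lambda>t. a t * W t ^ n) integrable_on {u..x}"
    using set_lebesgue_integral_eq_integral(1) by (simp add: mult.commute)
  then have aW_int: "(\<lambda>t. a t * W t ^ n) integrable_on {s..t}" if "u \<le> s" "t \<le> x" for s t
    by (rule integrable_subinterval_real) (use that in auto)
  define h where "h t = integral {u..t} (\<lambda>t. a t * W t ^ n) - W t ^ Suc n / Suc n" for t
  have "h t - h s \<le> (n * W x ^ (n - 1)) * (W t - W s)^2" if st: "u \<le> s" "s \<le> t" "t \<le> x" for s t
  proof -
    have "integral {u..t} (\<lambda>t. a t * W t ^ n) - integral {u..s} (\<lambda>t. a t * W t ^ n)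
          = integral {s..t} (\<lambda>t. a t * W t ^ n)"
      using Henstock_Kurzweil_Integration.integral_combine[of u s t "\<lambda>t. a t * W t ^ n"] aW_int[of u t] st
      by (simp add: algebra_simps)
    also have "\<dots> \<le> integral {s..t} (\<lambda>r. a r * W t ^ n)"
      using a_int[of s t] aW_int[of s t] st a W_nonneg W_mono
      by (intro integral_le integrable_on_mult_left) (auto intro!: mult_left_mono power_mono)
    also have "\<dots> = W t ^ n * (W t - W s)"
      using W_diff[OF st] by simp
    finally have "integral {u..t} (\<lambda>t. a t * W t ^ n) - integral {u..s} (\<lambda>t. a t * W t ^ n)
       \<le> W t ^ n * (W t - W s)" .
    moreover have "W s ^ n * (W t - W s) \<le> (W t ^ Suc n - W s ^ Suc n) / Suc n"
      using mult_diff_le_power_Suc_diff[of "W s" "W t" n] W_nonneg W_mono st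
      by (simp add: field_simps del: of_nat_Suc)
    ultimately have "h t - h s \<le> (W t ^ n - W s ^ n) * (W t - W s)"
      unfolding h_def by (simp add: diff_divide_distrib algebra_simps)
    also have "\<dots> \<le> (n * W x ^ (n - 1) * (W t - W s)) * (W t - W s)"
      using power_diff_le_Lipschitz[of "W s" "W t" "W x" n] W_nonneg W_mono st
      by (intro mult_right_mono) auto
    finally show ?thesis
      by (simp add: power2_eq_square mult.assoc)
  qed
  then have "h x \<le> h u"
    by (intro le_if_quadratic_increments[OF \<open>u \<le> x\<close> W_cont]) (auto intro!: mono_onI W_mono)
  then show ?thesis
    unfolding h_def W_def by simp
qed

lemma integral_mult_power_indefinite_integral_le':
  fixes a :: "real \<Rightarrow> real"
  assumes "x \<le> u" and a: "a integrable_on {x..u}" "\<And>t. 0 \<le> a t"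
  shows "integral {x..u} (\<lambda>t. a t * integral {t..u} a ^ n) \<le> integral {x..u} a ^ Suc n / Suc n"
proof -
  have "integral {-u..-x} (\<lambda>s. a (-s) * integral {-u..s} (\<lambda>t. a (-t)) ^ n)
      \<le> integral {-u..-x} (\<lambda>t. a (-t)) ^ Suc n / Suc n"
    by (rule integral_mult_power_indefinite_integral_le) (use assms in auto)
  moreover have "integral {-u..s} (\<lambda>t. a (-t)) = integral {-s..u} a" for s
    using Henstock_Kurzweil_Integration.integral_reflect_real[of u "-s" a] by simp
  ultimately show ?thesis
    using Henstock_Kurzweil_Integration.integral_reflect_real[of u x "\<lambda>t. a t * integral {t..u} a ^ n"] by simp
qed

section \<open>Oriented integrals\<close>

definition oriented_integral :: "(real \<Rightarrow> 'a::banach) \<Rightarrow> real \<Rightarrow> real \<Rightarrow> 'a" where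
  "oriented_integral f u x = (if u \<le> x then integral {u..x} f else - integral {x..u} f)"

definition integral_between :: "(real \<Rightarrow> real) \<Rightarrow> real \<Rightarrow> real \<Rightarrow> real" where
  "integral_between f u x = (if u \<le> x then integral {u..x} f else integral {x..u} f)"

lemma oriented_integral_self [simp]: "oriented_integral f u u = 0"
  by (simp add: oriented_integral_def)

lemma oriented_integral_increment:
  fixes f :: "real \<Rightarrow> 'a::banach"
  assumes f: "\<And>a b. f integrable_on {a..b}" and "x \<le> y"
  shows "oriented_integral f u y - oriented_integral f u x = integral {x..y} f"
proof -
  note combine = Henstock_Kurzweil_Integration.integral_combine
  consider "u \<le> x" | "x < u" "u \<le> y" | "y < u"
    using \<open>x \<le> y\<close> by linarith
  then show ?thesis
  proof cases
    case 1
    then show ?thesis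
      using combine[of u x y f] f \<open>x \<le> y\<close> by (simp add: oriented_integral_def algebra_simps)
  next
    case 2
    then show ?thesis
      using combine[of x u y f] f \<open>x \<le> y\<close> by (simp add: oriented_integral_def algebra_simps)
  next
    case 3
    then show ?thesis
      using combine[of x y u f] f \<open>x \<le> y\<close> by (simp add: oriented_integral_def algebra_simps)
  qed
qed

lemma oriented_integral_diff:
  fixes f g :: "real \<Rightarrow> 'a::banach"
  assumes "\<And>a b. f integrable_on {a..b}" "\<And>a b. g integrable_on {a..b}"
  shows "oriented_integral (\<lambda>t. f t - g t) u x = oriented_integral f u x - oriented_integral g u x"
  unfolding oriented_integral_def using assms by (auto simp: Henstock_Kurzweil_Integration.integral_diff)

lemma oriented_integral_sum:
  fixes f :: "nat \<Rightarrow> real \<Rightarrow> 'a::banach"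
  assumes "\<And>i a b. f i integrable_on {a..b}"
  shows "oriented_integral (\<lambda>t. \<Sum>i<N. f i t) u x = (\<Sum>i<N. oriented_integral (f i) u x)"
  unfolding oriented_integral_def using assms by (auto simp: integral_sum sum_negf)

lemma continuous_on_oriented_integral:
  fixes f :: "real \<Rightarrow> 'a::banach"
  assumes f: "\<And>a b. f integrable_on {a..b}"
  shows "continuous_on S (oriented_integral f u)"
proof (rule continuous_at_imp_continuous_on, intro ballI)
  fix x
  have "continuous_on {x-1..x+1} (\<lambda>y. oriented_integral f u (x-1) + integral {x-1..y} f)"
    by (intro continuous_intros indefinite_integral_continuous_1 f)
  then have "continuous_on {x-1..x+1} (oriented_integral f u)"
  proof (rule continuous_on_eq)
    fix y assume "y \<in> {x-1..x+1}"
    then show "oriented_integral f u (x-1) + integral {x-1..y} f = oriented_integral f u y"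
      using oriented_integral_increment[OF f, of "x-1" y u] by (simp add: algebra_simps)
  qed
  then show "isCont (oriented_integral f u) x"
    by (rule continuous_on_interior) auto
qed

lemma oriented_integral_has_vector_derivative:
  fixes f :: "real \<Rightarrow> 'a::banach"
  assumes f: "continuous_on UNIV f"
  shows "(oriented_integral f u has_vector_derivative f x) (at x)"
proof -
  have f_int: "f integrable_on {a..b}" for a b
    by (rule integrable_continuous_interval) (use f continuous_on_subset in blast)
  have "((\<lambda>y. integral {x-1..y} f) has_vector_derivative f x) (at x within {x-1..x+1})"
    by (rule integral_has_vector_derivative) (use f continuous_on_subset in auto)
  then have "((\<lambda>y. integral {x-1..y} f) has_vector_derivative f x) (at x)"
    by (simp add: at_within_Icc_at)
  then have "((\<lambda>y. oriented_integral f u (x-1) + integral {x-1..y} f) has_vector_derivative f x) (at x)"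
    by (intro derivative_eq_intros) auto
  then show ?thesis
  proof (rule has_vector_derivative_transform_within_open[where S="{x-1<..<x+1}"])
    fix y assume "y \<in> {x-1<..<x+1}"
    then show "oriented_integral f u (x-1) + integral {x-1..y} f = oriented_integral f u y"
      using oriented_integral_increment[OF f_int, of "x-1" y u] by (simp add: algebra_simps)
  qed auto
qed

lemma norm_oriented_integral_le:
  fixes f :: "real \<Rightarrow> 'a::euclidean_space"
  assumes "\<And>a b. f integrable_on {a..b}" "\<And>a b. g integrable_on {a..b}"
    and "\<And>t. t \<in> {min u x..max u x} \<Longrightarrow> norm (f t) \<le> g t"
  shows "norm (oriented_integral f u x) \<le> integral_between g u x"
  unfolding oriented_integral_def integral_between_def
  using integral_norm_bound_integral[OF assms(1,2), of u x]
    integral_norm_bound_integral[OF assms(1,2), of x u] assms(3)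
  by auto

lemma integral_between_mono:
  assumes "\<And>a b. f integrable_on {a..b}" "\<And>a b. g integrable_on {a..b}" "\<And>t. f t \<le> g t"
  shows "integral_between f u x \<le> integral_between g u x"
  unfolding integral_between_def using assms by (auto intro: integral_le)

lemma integral_between_add:
  assumes "\<And>a b. f integrable_on {a..b}" "\<And>a b. g integrable_on {a..b}"
  shows "integral_between (\<lambda>t. f t + g t) u x = integral_between f u x + integral_between g u x"
  unfolding integral_between_def using assms by (auto simp: Henstock_Kurzweil_Integration.integral_add)

lemma integral_between_cmult: "integral_between (\<lambda>t. c * f t) u x = c * integral_between f u x"
  unfolding integral_between_def by auto

lemma integral_between_nonneg:
  assumes "\<And>a b. f integrable_on {a..b}" "\<And>t. 0 \<le> f t"
  shows "0 \<le> integral_between f u x"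
  unfolding integral_between_def using assms by (auto intro: Henstock_Kurzweil_Integration.integral_nonneg)

lemma integral_between_eq_abs:
  assumes "\<And>a b. f integrable_on {a..b}" "\<And>t. 0 \<le> f t"
  shows "integral_between f u x = \<bar>oriented_integral f u x\<bar>"
  unfolding integral_between_def oriented_integral_def
  using Henstock_Kurzweil_Integration.integral_nonneg[OF assms(1)] assms(2) by auto

lemma continuous_on_integral_between:
  assumes "\<And>a b. f integrable_on {a..b}" "\<And>t. 0 \<le> f t"
  shows "continuous_on S (integral_between f u)"
  unfolding integral_between_eq_abs[OF assms, abs_def]
  by (intro continuous_intros continuous_on_oriented_integral assms)

lemma integral_between_le_integral:
  assumes "\<And>a b. f integrable_on {a..b}" "\<And>t. 0 \<le> f t" and "u \<in> {c..d}" "x \<in> {c..d}"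
  shows "integral_between f u x \<le> integral {c..d} f"
  unfolding integral_between_def using assms by (auto intro!: integral_subset_le)

lemma integral_between_mult_power_le:
  fixes a :: "real \<Rightarrow> real"
  assumes "\<And>c d. a integrable_on {c..d}" "\<And>t. 0 \<le> a t"
  shows "integral_between (\<lambda>t. a t * integral_between a u t ^ n) u x \<le> integral_between a u x ^ Suc n / Suc n"
proof (cases "u \<le> x")
  case True
  have "integral {u..x} (\<lambda>t. a t * integral_between a u t ^ n) = integral {u..x} (\<lambda>t. a t * integral {u..t} a ^ n)"
    by (rule integral_cong) (auto simp: integral_between_def)
  then show ?thesis
    using integral_mult_power_indefinite_integral_le[OF True assms(1,2), of n] True
    by (simp add: integral_between_def)
next
  case False
  have "integral {x..u} (\<lambda>t. a t * integral_between a u t ^ n) = integral {x..u} (\<lambda>t. a t * integral {t..u} a ^ n)"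
    by (rule integral_cong) (auto simp: integral_between_def)
  then show ?thesis
    using integral_mult_power_indefinite_integral_le'[of x u a n] False assms
    by (simp add: integral_between_def)
qed

lemma integrable_on_if_continuous_on_UNIV:
  fixes f :: "real \<Rightarrow> 'a::banach"
  shows "continuous_on UNIV f \<Longrightarrow> f integrable_on {a..b}"
  by (rule integrable_continuous_interval) (use continuous_on_subset in blast)

lemma continuous_on_UNIV_if_uniform_limit_on_intervals:
  fixes F :: "nat \<Rightarrow> real \<Rightarrow> 'a::metric_space"
  assumes "\<And>c d. uniform_limit {c..d} F f sequentially" and "\<And>N. continuous_on UNIV (F N)"
  shows "continuous_on UNIV f"
proof (rule continuous_at_imp_continuous_on, intro ballI)
  fix x :: real
  have "continuous_on {x-1..x+1} f"
    by (rule uniform_limit_theorem[OF _ assms(1)])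
      (auto intro!: always_eventually continuous_on_subset[OF assms(2)])
  then show "isCont f x"
    by (rule continuous_on_interior) auto
qed

lemma oriented_integral_mult_tendsto:
  fixes F :: "nat \<Rightarrow> real \<Rightarrow> complex"
  assumes lim: "uniform_limit {min u x..max u x} F f sequentially"
    and int: "\<And>N a b. (\<lambda>t. q t * F N t) integrable_on {a..b}" "\<And>a b. (\<lambda>t. q t * f t) integrable_on {a..b}"
    and w: "\<And>a b. w integrable_on {a..b}" "\<And>t. norm (q t) \<le> w t"
  shows "(\<lambda>N. oriented_integral (\<lambda>t. q t * F N t) u x) \<longlonglongrightarrow> oriented_integral (\<lambda>t. q t * f t) u x"
proof (rule tendstoI)
  fix e :: real assume "e > 0"
  define Q where "Q = integral_between w u x"
  have "0 \<le> Q"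
    unfolding Q_def by (rule integral_between_nonneg[OF w(1)]) (use w(2) norm_ge_zero order_trans in blast)
  define \<delta> where "\<delta> = e / (Q + 1)"
  have "\<delta> > 0"
    using \<open>e > 0\<close> \<open>0 \<le> Q\<close> by (simp add: \<delta>_def)
  show "\<forall>\<^sub>F N in sequentially.
      dist (oriented_integral (\<lambda>t. q t * F N t) u x) (oriented_integral (\<lambda>t. q t * f t) u x) < e"
    using uniform_limitD[OF lim \<open>\<delta> > 0\<close>]
  proof eventually_elim
    case (elim N)
    have "norm (q t * F N t - q t * f t) \<le> \<delta> * w t" if "t \<in> {min u x..max u x}" for t
    proof -
      have "dist (F N t) (f t) < \<delta>"
        using elim that by blast
      moreover have "0 \<le> w t"
        using w(2)[of t] norm_ge_zero order_trans by blast
      ultimately have "norm (q t) * dist (F N t) (f t) \<le> w t * \<delta>"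
        by (intro mult_mono w(2)) auto
      then show ?thesis
        by (simp add: dist_norm norm_mult[symmetric] right_diff_distrib mult.commute)
    qed
    then have "norm (oriented_integral (\<lambda>t. q t * F N t - q t * f t) u x) \<le> integral_between (\<lambda>t. \<delta> * w t) u x"
      by (intro norm_oriented_integral_le integrable_on_mult_right w(1)
          Henstock_Kurzweil_Integration.integrable_diff int)
    also have "\<dots> = \<delta> * Q"
      by (simp add: integral_between_cmult Q_def)
    also have "\<dots> < e"
      using \<open>e > 0\<close> \<open>0 \<le> Q\<close> unfolding \<delta>_def by (simp add: field_simps)
    finally show ?case
      by (simp add: dist_norm oriented_integral_diff[OF int(1,2)])
  qed
qed

section \<open>Existence of solutions\<close>

locale locally_integrable_potential =
  fixes V :: "real \<Rightarrow> complex"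
  assumes locally_absolutely_integrable: "\<And>a b. V absolutely_integrable_on {a..b}"
begin

definition weight :: "complex \<Rightarrow> real \<Rightarrow> real" where
  "weight lam t = 1 + cmod lam + cmod (V t)"

lemma one_le_weight: "1 \<le> weight lam t"
  and weight_nonneg: "0 \<le> weight lam t"
  by (auto simp: weight_def)

lemma norm_potential_le_weight: "cmod (V t - lam) \<le> weight lam t"
  unfolding weight_def using norm_triangle_ineq4[of "V t" lam] by simp

lemma weight_integrable: "weight lam integrable_on {a..b}"
proof -
  have "(\<lambda>t. cmod (V t)) integrable_on {a..b}"
    using locally_absolutely_integrable absolutely_integrable_on_def by blast
  then have "(\<lambda>t. (1 + cmod lam) + cmod (V t)) integrable_on {a..b}"
    by (intro Henstock_Kurzweil_Integration.integrable_add integrable_const_ivl)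
  then show ?thesis
    by (simp add: weight_def[abs_def] add.assoc)
qed

lemma integral_weight_nonneg: "0 \<le> integral {a..b} (weight lam)"
  by (rule Henstock_Kurzweil_Integration.integral_nonneg[OF weight_integrable]) (simp add: weight_nonneg)

lemma potential_mult_integrable:
  assumes "continuous_on UNIV g"
  shows "(\<lambda>t. (V t - lam) * g t) integrable_on {a..b}"
proof -
  have "(\<lambda>t. g t * V t) absolutely_integrable_on {a..b}"
    by (rule absolutely_integrable_continuous_mult)
      (use assms locally_absolutely_integrable continuous_on_subset in blast)+
  moreover have "(\<lambda>t. lam * g t) integrable_on {a..b}"
    by (intro integrable_on_if_continuous_on_UNIV continuous_intros assms)
  ultimately have "(\<lambda>t. g t * V t - lam * g t) integrable_on {a..b}"
    by (intro Henstock_Kurzweil_Integration.integrable_diff) (auto simp: absolutely_integrable_on_def)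
  then show ?thesis
    by (simp add: algebra_simps)
qed

lemma weight_mult_integrable:
  assumes "continuous_on UNIV g"
  shows "(\<lambda>t. weight lam t * g t) integrable_on {a..b}"
proof -
  have "weight lam absolutely_integrable_on {a..b}"
    by (rule nonnegative_absolutely_integrable_1[OF weight_integrable]) (simp add: weight_nonneg)
  then have "(\<lambda>t. g t * weight lam t) absolutely_integrable_on {a..b}"
    by (rule absolutely_integrable_continuous_mult[rotated]) (use assms continuous_on_subset in blast)
  then show ?thesis
    by (simp add: absolutely_integrable_on_def mult.commute)
qed

text \<open>The terms of the Neumann series solving the integral equations
  \<open>\<psi> x = al + \<integral>\<^sub>u\<^sup>x \<psi>'\<close> and \<open>\<psi>' x = be + \<integral>\<^sub>u\<^sup>x (V - lam) \<psi>\<close>.\<close>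

fun picard :: "complex \<Rightarrow> real \<Rightarrow> complex \<Rightarrow> complex \<Rightarrow> nat \<Rightarrow> (real \<Rightarrow> complex) \<times> (real \<Rightarrow> complex)" where
  "picard lam u al be 0 = (\<lambda>x. al, \<lambda>x. be)"
| "picard lam u al be (Suc n) =
     (oriented_integral (snd (picard lam u al be n)) u,
      oriented_integral (\<lambda>t. (V t - lam) * fst (picard lam u al be n) t) u)"

lemma continuous_picard:
  "continuous_on UNIV (fst (picard lam u al be n)) \<and> continuous_on UNIV (snd (picard lam u al be n))"
  by (induction n) (auto intro!: continuous_on_oriented_integral integrable_on_if_continuous_on_UNIV
      potential_mult_integrable)

lemma picard_bound:
  "norm (fst (picard lam u al be n) x) + norm (snd (picard lam u al be n) x)
     \<le> (cmod al + cmod be) * integral_between (weight lam) u x ^ n / fact n"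
proof (induction n arbitrary: x)
  case (Suc n)
  define P where "P = fst (picard lam u al be n)"
  define D where "D = snd (picard lam u al be n)"
  define B where "B = cmod al + cmod be"
  define \<Omega> where "\<Omega> = integral_between (weight lam) u"
  have P: "continuous_on UNIV P" and D: "continuous_on UNIV D"
    using continuous_picard unfolding P_def D_def by auto
  have int: "(\<lambda>t. weight lam t * (norm (P t) + norm (D t))) integrable_on {a..b}"
    "(\<lambda>t. weight lam t * \<Omega> t ^ n) integrable_on {a..b}" for a b
    unfolding \<Omega>_def by (intro weight_mult_integrable continuous_intros P D
        continuous_on_integral_between weight_integrable weight_nonneg)+
  have "norm (fst (picard lam u al be (Suc n)) x) + norm (snd (picard lam u al be (Suc n)) x)
      \<le> integral_between (\<lambda>t. norm (D t)) u x + integral_between (\<lambda>t. weight lam t * norm (P t)) u x"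
    unfolding picard.simps P_def[symmetric] D_def[symmetric] fst_conv snd_conv
    using norm_potential_le_weight
    by (intro add_mono norm_oriented_integral_le integrable_on_if_continuous_on_UNIV continuous_intros
        potential_mult_integrable weight_mult_integrable P D) (auto simp: norm_mult intro: mult_right_mono)
  also have "\<dots> \<le> integral_between (\<lambda>t. weight lam t * (norm (P t) + norm (D t))) u x"
  proof -
    have "norm (D t) + weight lam t * norm (P t) \<le> weight lam t * (norm (P t) + norm (D t))" for t
      using one_le_weight[of lam t] mult_right_mono[of 1 "weight lam t" "norm (D t)"]
      by (simp add: algebra_simps)
    then show ?thesis
      by (subst integral_between_add[symmetric])
        (intro integral_between_mono Henstock_Kurzweil_Integration.integrable_add int
          integrable_on_if_continuous_on_UNIV weight_mult_integrable continuous_intros P D)+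
  qed
  also have "\<dots> \<le> integral_between (\<lambda>t. B / fact n * (weight lam t * \<Omega> t ^ n)) u x"
  proof (rule integral_between_mono[OF int(1) integrable_on_mult_right[OF int(2)]])
    fix t
    have "norm (P t) + norm (D t) \<le> B * \<Omega> t ^ n / fact n"
      using Suc.IH unfolding P_def D_def B_def \<Omega>_def .
    from mult_left_mono[OF this weight_nonneg]
    show "weight lam t * (norm (P t) + norm (D t)) \<le> B / fact n * (weight lam t * \<Omega> t ^ n)"
      by (simp add: field_simps)
  qed
  also have "\<dots> \<le> B / fact n * (\<Omega> x ^ Suc n / Suc n)"
    unfolding integral_between_cmult \<Omega>_def B_def
    by (intro mult_left_mono integral_between_mult_power_le weight_integrable weight_nonneg) auto
  also have "\<dots> = B * \<Omega> x ^ Suc n / fact (Suc n)"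
    by (simp add: field_simps)
  finally show ?case
    unfolding B_def \<Omega>_def .
qed simp

lemma picard_bound_on_interval:
  assumes "u \<in> {c..d}" "x \<in> {c..d}"
  shows "norm (fst (picard lam u al be n) x) \<le> (cmod al + cmod be) * integral {c..d} (weight lam) ^ n / fact n"
    and "norm (snd (picard lam u al be n) x) \<le> (cmod al + cmod be) * integral {c..d} (weight lam) ^ n / fact n"
proof -
  have "integral_between (weight lam) u x ^ n \<le> integral {c..d} (weight lam) ^ n"
    using assms by (intro power_mono integral_between_le_integral integral_between_nonneg
        weight_integrable weight_nonneg)
  then have "(cmod al + cmod be) * integral_between (weight lam) u x ^ n / fact n
      \<le> (cmod al + cmod be) * integral {c..d} (weight lam) ^ n / fact n"
    by (intro divide_right_mono mult_left_mono) auto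
  with picard_bound[of lam u al be n x]
  show "norm (fst (picard lam u al be n) x) \<le> (cmod al + cmod be) * integral {c..d} (weight lam) ^ n / fact n"
    and "norm (snd (picard lam u al be n) x) \<le> (cmod al + cmod be) * integral {c..d} (weight lam) ^ n / fact n"
    by (smt (verit) norm_ge_zero)+
qed

lemma uniform_limit_picard:
  "uniform_limit {c..d} (\<lambda>N x. \<Sum>i<N. fst (picard lam u al be i) x)
     (\<lambda>x. \<Sum>i. fst (picard lam u al be i) x) sequentially"
  "uniform_limit {c..d} (\<lambda>N x. \<Sum>i<N. snd (picard lam u al be i) x)
     (\<lambda>x. \<Sum>i. snd (picard lam u al be i) x) sequentially"
proof -
  define c' d' where "c' = min c u" and "d' = max d u"
  define M where "M n = (cmod al + cmod be) * integral {c'..d'} (weight lam) ^ n / fact n" for n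
  have "summable (\<lambda>n. integral {c'..d'} (weight lam) ^ n / fact n)"
    using summable_exp[of "integral {c'..d'} (weight lam)"] by (simp add: divide_inverse_commute)
  then have "summable (\<lambda>n. (cmod al + cmod be) * (integral {c'..d'} (weight lam) ^ n / fact n))"
    by (rule summable_mult)
  then have "summable M"
    by (simp only: M_def[abs_def] times_divide_eq_right)
  have "u \<in> {c'..d'}" and sub: "{c..d} \<subseteq> {c'..d'}"
    by (auto simp: c'_def d'_def)
  then have bound: "norm (fst (picard lam u al be n) x) \<le> M n" "norm (snd (picard lam u al be n) x) \<le> M n"
    if "x \<in> {c'..d'}" for n x
    using picard_bound_on_interval[OF _ that] unfolding M_def by auto
  show "uniform_limit {c..d} (\<lambda>N x. \<Sum>i<N. fst (picard lam u al be i) x)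
      (\<lambda>x. \<Sum>i. fst (picard lam u al be i) x) sequentially"
    by (rule uniform_limit_on_subset[OF Weierstrass_m_test[OF bound(1) \<open>summable M\<close>] sub])
  show "uniform_limit {c..d} (\<lambda>N x. \<Sum>i<N. snd (picard lam u al be i) x)
      (\<lambda>x. \<Sum>i. snd (picard lam u al be i) x) sequentially"
    by (rule uniform_limit_on_subset[OF Weierstrass_m_test[OF bound(2) \<open>summable M\<close>] sub])
qed

definition picard_solution :: "complex \<Rightarrow> real \<Rightarrow> complex \<Rightarrow> complex \<Rightarrow> real \<Rightarrow> complex" where
  "picard_solution lam u al be x = (\<Sum>i. fst (picard lam u al be i) x)"

definition picard_derivative :: "complex \<Rightarrow> real \<Rightarrow> complex \<Rightarrow> complex \<Rightarrow> real \<Rightarrow> complex" where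
  "picard_derivative lam u al be x = (\<Sum>i. snd (picard lam u al be i) x)"

lemma continuous_picard_solution: "continuous_on UNIV (picard_solution lam u al be)"
  and continuous_picard_derivative: "continuous_on UNIV (picard_derivative lam u al be)"
  unfolding picard_solution_def[abs_def] picard_derivative_def[abs_def]
  by (rule continuous_on_UNIV_if_uniform_limit_on_intervals[OF uniform_limit_picard(1)],
      use continuous_picard in \<open>auto intro!: continuous_on_sum\<close>)
    (rule continuous_on_UNIV_if_uniform_limit_on_intervals[OF uniform_limit_picard(2)],
      use continuous_picard in \<open>auto intro!: continuous_on_sum\<close>)

lemma picard_solution_eq:
  "picard_solution lam u al be x = al + oriented_integral (picard_derivative lam u al be) u x"
proof -
  define P D where "P = (\<lambda>i. fst (picard lam u al be i))" and "D = (\<lambda>i. snd (picard lam u al be i))"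
  have "(\<lambda>N. oriented_integral (\<lambda>t. 1 * (\<Sum>i<N. D i t)) u x)
      \<longlonglongrightarrow> oriented_integral (\<lambda>t. 1 * picard_derivative lam u al be t) u x"
    using uniform_limit_picard(2) continuous_picard continuous_picard_derivative
    unfolding D_def picard_derivative_def[abs_def]
    by (intro oriented_integral_mult_tendsto[where w="\<lambda>_. 1"])
      (auto intro!: integrable_on_if_continuous_on_UNIV continuous_on_sum)
  moreover have "oriented_integral (\<lambda>t. 1 * (\<Sum>i<N. D i t)) u x = (\<Sum>i<N. P (Suc i) x)" for N
    using continuous_picard unfolding P_def D_def
    by (simp add: oriented_integral_sum integrable_on_if_continuous_on_UNIV)
  ultimately have "(\<lambda>i. P (Suc i) x) sums oriented_integral (picard_derivative lam u al be) u x"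
    by (simp add: sums_def)
  then have "(\<lambda>i. P i x) sums (oriented_integral (picard_derivative lam u al be) u x + P 0 x)"
    by (subst sums_Suc_iff[symmetric])
  then show ?thesis
    unfolding picard_solution_def by (simp add: sums_iff P_def)
qed

lemma picard_derivative_eq:
  "picard_derivative lam u al be x = be + oriented_integral (\<lambda>t. (V t - lam) * picard_solution lam u al be t) u x"
proof -
  define P D where "P = (\<lambda>i. fst (picard lam u al be i))" and "D = (\<lambda>i. snd (picard lam u al be i))"
  have "(\<lambda>N. oriented_integral (\<lambda>t. (V t - lam) * (\<Sum>i<N. P i t)) u x)
      \<longlonglongrightarrow> oriented_integral (\<lambda>t. (V t - lam) * picard_solution lam u al be t) u x"
    using uniform_limit_picard(1) continuous_picard continuous_picard_solution
    unfolding P_def picard_solution_def[abs_def]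
    by (intro oriented_integral_mult_tendsto[where w="weight lam"] weight_integrable
        norm_potential_le_weight) (auto intro!: potential_mult_integrable continuous_on_sum)
  moreover have "oriented_integral (\<lambda>t. (V t - lam) * (\<Sum>i<N. P i t)) u x = (\<Sum>i<N. D (Suc i) x)" for N
    using continuous_picard unfolding P_def D_def sum_distrib_left
    by (simp add: oriented_integral_sum potential_mult_integrable)
  ultimately have "(\<lambda>i. D (Suc i) x) sums oriented_integral (\<lambda>t. (V t - lam) * picard_solution lam u al be t) u x"
    by (simp add: sums_def)
  then have "(\<lambda>i. D i x) sums (oriented_integral (\<lambda>t. (V t - lam) * picard_solution lam u al be t) u x + D 0 x)"
    by (subst sums_Suc_iff[symmetric])
  then show ?thesis
    unfolding picard_derivative_def by (simp add: sums_iff D_def)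
qed

lemma is_solution_picard: "is_solution V lam (picard_solution lam u al be) (picard_derivative lam u al be)"
  unfolding is_solution_def
proof (intro conjI allI impI)
  fix x
  have "((\<lambda>x. al + oriented_integral (picard_derivative lam u al be) u x) has_vector_derivative
      picard_derivative lam u al be x) (at x)"
    using oriented_integral_has_vector_derivative[OF continuous_picard_derivative]
    by (intro derivative_eq_intros) auto
  then show "(picard_solution lam u al be has_vector_derivative picard_derivative lam u al be x) (at x)"
    by (simp add: picard_solution_eq[abs_def])
next
  fix a b :: real assume "a \<le> b"
  have int: "(\<lambda>t. (V t - lam) * picard_solution lam u al be t) integrable_on {a..b}" for a b
    by (rule potential_mult_integrable[OF continuous_picard_solution])
  then show "((\<lambda>t. (V t - lam) * picard_solution lam u al be t) has_integral
      picard_derivative lam u al be b - picard_derivative lam u al be a) {a..b}"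
    using oriented_integral_increment[OF int \<open>a \<le> b\<close>, of u]
    by (simp add: picard_derivative_eq integrable_integral)
qed

lemma solution_exists: "\<exists>\<psi> \<psi>'. is_solution V lam \<psi> \<psi>' \<and> \<psi> u = al \<and> \<psi>' u = be"
  using is_solution_picard[of lam u al be] picard_solution_eq[of lam u al be u]
    picard_derivative_eq[of lam u al be u] by auto

section \<open>The Wronskian and uniqueness\<close>

lemma continuous_on_solution: "is_solution V lam \<psi> \<psi>' \<Longrightarrow> continuous_on S \<psi>"
  unfolding is_solution_def
  by (meson continuous_at_imp_continuous_on continuous_on_eq_continuous_within
      has_vector_derivative_continuous)

lemma solution_derivative_has_integral:
  "is_solution V lam \<psi> \<psi>' \<Longrightarrow> x \<le> y \<Longrightarrow> ((\<lambda>t. (V t - lam) * \<psi> t) has_integral (\<psi>' y - \<psi>' x)) {x..y}"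
  unfolding is_solution_def by blast

lemma solution_has_integral: "is_solution V lam \<psi> \<psi>' \<Longrightarrow> x \<le> y \<Longrightarrow> (\<psi>' has_integral (\<psi> y - \<psi> x)) {x..y}"
  unfolding is_solution_def
  by (intro fundamental_theorem_of_calculus) (auto intro: has_vector_derivative_at_within)

lemma norm_has_integral_le_weight:
  fixes f :: "real \<Rightarrow> complex"
  assumes "(f has_integral i) {s..t}" and "\<And>r. r \<in> {s..t} \<Longrightarrow> norm (f r) \<le> C * weight lam r"
  shows "norm i \<le> C * integral {s..t} (weight lam)"
proof -
  have "norm (integral {s..t} f) \<le> integral {s..t} (\<lambda>r. C * weight lam r)"
  proof (rule integral_norm_bound_integral)
    show "f integrable_on {s..t}"
      using assms(1) by blast
    show "(\<lambda>r. C * weight lam r) integrable_on {s..t}"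
      by (rule integrable_on_mult_right[OF weight_integrable])
  qed (rule assms(2))
  then show ?thesis
    using integral_unique[OF assms(1)] by simp
qed

lemma norm_solution_diff_le:
  assumes "is_solution V lam \<psi> \<psi>'" "s \<le> t" "0 \<le> M'" "\<And>r. r \<in> {s..t} \<Longrightarrow> norm (\<psi>' r) \<le> M'"
  shows "norm (\<psi> t - \<psi> s) \<le> M' * integral {s..t} (weight lam)"
proof (rule norm_has_integral_le_weight[OF solution_has_integral[OF assms(1,2)]])
  fix r assume "r \<in> {s..t}"
  then show "norm (\<psi>' r) \<le> M' * weight lam r"
    using assms(3,4) one_le_weight[of lam r] mult_left_mono[of 1 "weight lam r" M'] by fastforce
qed

lemma norm_solution_derivative_diff_le:
  assumes "is_solution V lam \<psi> \<psi>'" "s \<le> t" "0 \<le> M" "\<And>r. r \<in> {s..t} \<Longrightarrow> norm (\<psi> r) \<le> M"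
  shows "norm (\<psi>' t - \<psi>' s) \<le> M * integral {s..t} (weight lam)"
proof (rule norm_has_integral_le_weight[OF solution_derivative_has_integral[OF assms(1,2)]])
  fix r assume "r \<in> {s..t}"
  then show "norm ((V r - lam) * \<psi> r) \<le> M * weight lam r"
    using assms(3,4) norm_potential_le_weight[of r lam]
    by (simp add: norm_mult mult.commute mult_mono)
qed

lemma solution_bounded:
  assumes "is_solution V lam \<psi> \<psi>'"
  obtains M where "0 \<le> M" "\<And>t. t \<in> {a..b} \<Longrightarrow> norm (\<psi> t) \<le> M"
proof -
  have "bounded (\<psi> ` {a..b})"
    by (intro compact_imp_bounded compact_continuous_image continuous_on_solution[OF assms]) auto
  then obtain M where "\<forall>x\<in>\<psi> ` {a..b}. norm x \<le> M"
    unfolding bounded_iff by blast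
  then show ?thesis
    using that[of "max M 0"] by force
qed

lemma solution_derivative_bounded:
  assumes "is_solution V lam \<psi> \<psi>'"
  obtains M' where "0 \<le> M'" "\<And>t. t \<in> {a..b} \<Longrightarrow> norm (\<psi>' t) \<le> M'"
proof -
  obtain M where "0 \<le> M" and M: "\<And>t. t \<in> {a..b} \<Longrightarrow> norm (\<psi> t) \<le> M"
    using solution_bounded[OF assms] by blast
  have "norm (\<psi>' t) \<le> norm (\<psi>' a) + M * integral {a..b} (weight lam)" if "t \<in> {a..b}" for t
  proof -
    have "norm (\<psi>' t - \<psi>' a) \<le> M * integral {a..t} (weight lam)"
      using that M by (intro norm_solution_derivative_diff_le[OF assms _ \<open>0 \<le> M\<close>]) auto
    also have "\<dots> \<le> M * integral {a..b} (weight lam)"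
      using that \<open>0 \<le> M\<close> weight_integrable weight_nonneg
      by (intro mult_left_mono integral_subset_le) auto
    finally show ?thesis
      using norm_triangle_ineq2[of "\<psi>' t" "\<psi>' a"] by linarith
  qed
  moreover have "0 \<le> norm (\<psi>' a) + M * integral {a..b} (weight lam)"
    using \<open>0 \<le> M\<close> integral_weight_nonneg by simp
  ultimately show ?thesis
    using that by blast
qed

text \<open>Subtracting the values at \<open>x\<close> inside both integrands makes each of them \<open>O(\<Omega>)\<close>, so
  the increment of the Wronskian is \<open>O(\<Omega>\<^sup>2)\<close> with \<open>\<Omega>\<close> the integral of the weight over \<open>[x, y]\<close>.\<close>

lemma wronskian_increment_le:
  assumes s1: "is_solution V lam \<psi>1 \<psi>1'" and s2: "is_solution V lam \<psi>2 \<psi>2'" and "x \<le> y"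
    and M: "0 \<le> M" "\<And>t. t \<in> {x..y} \<Longrightarrow> norm (\<psi>1 t) \<le> M \<and> norm (\<psi>2 t) \<le> M"
    and M': "0 \<le> M'" "\<And>t. t \<in> {x..y} \<Longrightarrow> norm (\<psi>1' t) \<le> M' \<and> norm (\<psi>2' t) \<le> M'"
  shows "norm ((\<psi>1 y * \<psi>2' y - \<psi>1' y * \<psi>2 y) - (\<psi>1 x * \<psi>2' x - \<psi>1' x * \<psi>2 x))
          \<le> 4 * M * M' * integral {x..y} (weight lam) ^ 2"
proof -
  define \<Omega> where "\<Omega> = integral {x..y} (weight lam)"
  have \<Omega>_sub: "integral {s..t} (weight lam) \<le> \<Omega>" if "x \<le> s" "t \<le> y" for s t
    unfolding \<Omega>_def using that weight_integrable weight_nonneg by (intro integral_subset_le) auto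
  have \<psi>_inc: "norm (\<psi>1 t - \<psi>1 x) \<le> M' * \<Omega> \<and> norm (\<psi>2 t - \<psi>2 x) \<le> M' * \<Omega>" if "t \<in> {x..y}" for t
    using that M' norm_solution_diff_le[OF s1, of x t M'] norm_solution_diff_le[OF s2, of x t M']
      \<Omega>_sub[of x t] mult_left_mono[of _ \<Omega> M']
    by (smt (verit, best) atLeastAtMost_iff)
  have \<psi>'_inc: "norm (\<psi>1' y - \<psi>1' t) \<le> M * \<Omega> \<and> norm (\<psi>2' y - \<psi>2' t) \<le> M * \<Omega>" if "t \<in> {x..y}" for t
    using that M norm_solution_derivative_diff_le[OF s1, of t y M] norm_solution_derivative_diff_le[OF s2, of t y M]
      \<Omega>_sub[of t y] mult_left_mono[of _ \<Omega> M]
    by (smt (verit, best) atLeastAtMost_iff)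
  have "0 \<le> \<Omega>"
    unfolding \<Omega>_def by (rule integral_weight_nonneg)
  define A where "A = \<psi>1 x * (\<psi>2' y - \<psi>2' x) - \<psi>2 x * (\<psi>1' y - \<psi>1' x)"
  define B where "B = (\<psi>1 y - \<psi>1 x) * \<psi>2' y - (\<psi>2 y - \<psi>2 x) * \<psi>1' y"
  have "((\<lambda>t. \<psi>1 x * ((V t - lam) * \<psi>2 t) - \<psi>2 x * ((V t - lam) * \<psi>1 t)) has_integral A) {x..y}"
    unfolding A_def
    by (intro has_integral_diff has_integral_mult_right solution_derivative_has_integral s1 s2 \<open>x \<le> y\<close>)
  then have "((\<lambda>t. (V t - lam) * (\<psi>1 x * (\<psi>2 t - \<psi>2 x) - \<psi>2 x * (\<psi>1 t - \<psi>1 x))) has_integral A) {x..y}"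
    by (simp add: algebra_simps)
  then have A: "norm A \<le> 2 * M * M' * \<Omega> * \<Omega>"
    unfolding \<Omega>_def
  proof (rule norm_has_integral_le_weight)
    fix t assume t: "t \<in> {x..y}"
    have "norm (\<psi>1 x * (\<psi>2 t - \<psi>2 x) - \<psi>2 x * (\<psi>1 t - \<psi>1 x)) \<le> M * (M' * \<Omega>) + M * (M' * \<Omega>)"
      using M(2)[of x] \<psi>_inc[OF t] \<open>x \<le> y\<close> M
      by (intro order_trans[OF norm_triangle_ineq4] add_mono) (auto simp: norm_mult intro: mult_mono)
    then have "norm (V t - lam) * norm (\<psi>1 x * (\<psi>2 t - \<psi>2 x) - \<psi>2 x * (\<psi>1 t - \<psi>1 x))
        \<le> weight lam t * (2 * M * M' * \<Omega>)"
      by (intro mult_mono norm_potential_le_weight weight_nonneg) auto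
    then show "norm ((V t - lam) * (\<psi>1 x * (\<psi>2 t - \<psi>2 x) - \<psi>2 x * (\<psi>1 t - \<psi>1 x)))
        \<le> 2 * M * M' * integral {x..y} (weight lam) * weight lam t"
      by (simp add: norm_mult \<Omega>_def mult_ac)
  qed
  have "((\<lambda>t. \<psi>1' t * \<psi>2' y - \<psi>2' t * \<psi>1' y) has_integral B) {x..y}"
    unfolding B_def
    by (intro has_integral_diff has_integral_mult_left solution_has_integral[OF s1]
        solution_has_integral[OF s2] \<open>x \<le> y\<close>)
  then have "((\<lambda>t. \<psi>1' t * (\<psi>2' y - \<psi>2' t) - \<psi>2' t * (\<psi>1' y - \<psi>1' t)) has_integral B) {x..y}"
    by (simp add: algebra_simps)
  then have B: "norm B \<le> 2 * M * M' * \<Omega> * \<Omega>"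
    unfolding \<Omega>_def
  proof (rule norm_has_integral_le_weight)
    fix t assume t: "t \<in> {x..y}"
    have "norm (\<psi>1' t * (\<psi>2' y - \<psi>2' t) - \<psi>2' t * (\<psi>1' y - \<psi>1' t)) \<le> M' * (M * \<Omega>) + M' * (M * \<Omega>)"
      using M'(2)[OF t] \<psi>'_inc[OF t] M'
      by (intro order_trans[OF norm_triangle_ineq4] add_mono) (auto simp: norm_mult intro: mult_mono)
    also have "\<dots> = 2 * M * M' * \<Omega> * 1"
      by simp
    also have "\<dots> \<le> 2 * M * M' * \<Omega> * weight lam t"
      using M M' \<open>0 \<le> \<Omega>\<close> by (intro mult_left_mono one_le_weight) auto
    finally show "norm (\<psi>1' t * (\<psi>2' y - \<psi>2' t) - \<psi>2' t * (\<psi>1' y - \<psi>1' t))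
        \<le> 2 * M * M' * integral {x..y} (weight lam) * weight lam t"
      unfolding \<Omega>_def .
  qed
  have "(\<psi>1 y * \<psi>2' y - \<psi>1' y * \<psi>2 y) - (\<psi>1 x * \<psi>2' x - \<psi>1' x * \<psi>2 x) = A + B"
    unfolding A_def B_def by (simp add: algebra_simps)
  then show ?thesis
    using norm_triangle_ineq[of A B] A B unfolding \<Omega>_def[symmetric] by (simp add: power2_eq_square)
qed

lemma wronskian_eq:
  assumes s1: "is_solution V lam \<psi>1 \<psi>1'" and s2: "is_solution V lam \<psi>2 \<psi>2'"
  shows "\<psi>1 b * \<psi>2' b - \<psi>1' b * \<psi>2 b = \<psi>1 a * \<psi>2' a - \<psi>1' a * \<psi>2 a"
proof -
  have "\<psi>1 b * \<psi>2' b - \<psi>1' b * \<psi>2 b = \<psi>1 a * \<psi>2' a - \<psi>1' a * \<psi>2 a" if "a \<le> b" for a b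
  proof -
    obtain M1 M2 M1' M2' where
      "0 \<le> M1" "\<And>t. t \<in> {a..b} \<Longrightarrow> norm (\<psi>1 t) \<le> M1" "0 \<le> M2" "\<And>t. t \<in> {a..b} \<Longrightarrow> norm (\<psi>2 t) \<le> M2"
      "0 \<le> M1'" "\<And>t. t \<in> {a..b} \<Longrightarrow> norm (\<psi>1' t) \<le> M1'" "0 \<le> M2'" "\<And>t. t \<in> {a..b} \<Longrightarrow> norm (\<psi>2' t) \<le> M2'"
      using solution_bounded[OF s1] solution_bounded[OF s2]
        solution_derivative_bounded[OF s1] solution_derivative_bounded[OF s2] by metis
    then have M: "0 \<le> max M1 M2" "\<And>t. t \<in> {a..b} \<Longrightarrow> norm (\<psi>1 t) \<le> max M1 M2 \<and> norm (\<psi>2 t) \<le> max M1 M2"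
      and M': "0 \<le> max M1' M2'" "\<And>t. t \<in> {a..b} \<Longrightarrow> norm (\<psi>1' t) \<le> max M1' M2' \<and> norm (\<psi>2' t) \<le> max M1' M2'"
      by force+
    define W where "W t = integral {a..t} (weight lam)" for t
    have W_diff: "integral {x..y} (weight lam) = W y - W x" if "a \<le> x" "x \<le> y" for x y
      using Henstock_Kurzweil_Integration.integral_combine[of a x y "weight lam"] weight_integrable that
      unfolding W_def by auto
    have W_mono: "mono_on {a..b} W"
    proof (rule mono_onI)
      fix x y assume "x \<in> {a..b}" "y \<in> {a..b}" "x \<le> y"
      then show "W x \<le> W y"
        using W_diff[of x y] integral_weight_nonneg[of x y lam] by auto
    qed
    have W_cont: "continuous_on {a..b} W"
      unfolding W_def by (rule indefinite_integral_continuous_1[OF weight_integrable])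
    show ?thesis
    proof (rule constant_if_quadratic_increments[OF \<open>a \<le> b\<close> W_cont W_mono,
          where h="\<lambda>t. \<psi>1 t * \<psi>2' t - \<psi>1' t * \<psi>2 t"])
      fix x y assume "a \<le> x" "x \<le> y" "y \<le> b"
      then show "norm ((\<psi>1 y * \<psi>2' y - \<psi>1' y * \<psi>2 y) - (\<psi>1 x * \<psi>2' x - \<psi>1' x * \<psi>2 x))
          \<le> (4 * max M1 M2 * max M1' M2') * (W y - W x)^2"
        using wronskian_increment_le[OF s1 s2 \<open>x \<le> y\<close> M(1) _ M'(1)] M(2) M'(2) W_diff[of x y] by simp
    qed
  qed
  then show ?thesis
    by (metis linorder_le_cases)
qed

lemma is_solution_diff:
  assumes "is_solution V lam \<psi>1 \<psi>1'" "is_solution V lam \<psi>2 \<psi>2'"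
  shows "is_solution V lam (\<lambda>x. \<psi>1 x - \<psi>2 x) (\<lambda>x. \<psi>1' x - \<psi>2' x)"
  unfolding is_solution_def
proof (intro conjI allI impI)
  fix x
  show "((\<lambda>x. \<psi>1 x - \<psi>2 x) has_vector_derivative \<psi>1' x - \<psi>2' x) (at x)"
    using assms unfolding is_solution_def by (intro has_vector_derivative_diff) auto
next
  fix a b :: real assume "a \<le> b"
  have "((\<lambda>t. (V t - lam) * \<psi>1 t - (V t - lam) * \<psi>2 t) has_integral (\<psi>1' b - \<psi>1' a) - (\<psi>2' b - \<psi>2' a)) {a..b}"
    using assms \<open>a \<le> b\<close> by (intro has_integral_diff solution_derivative_has_integral)
  then show "((\<lambda>t. (V t - lam) * (\<psi>1 t - \<psi>2 t)) has_integral \<psi>1' b - \<psi>2' b - (\<psi>1' a - \<psi>2' a)) {a..b}"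
    by (simp add: algebra_simps)
qed

lemma is_solution_minus:
  assumes "is_solution V lam \<psi> \<psi>'"
  shows "is_solution V lam (\<lambda>x. - \<psi> x) (\<lambda>x. - \<psi>' x)"
proof -
  have "is_solution V lam (\<lambda>x. 0) (\<lambda>x. 0)"
    unfolding is_solution_def by auto
  from is_solution_diff[OF this assms] show ?thesis
    by simp
qed

lemma solution_unique:
  assumes s1: "is_solution V lam \<psi>1 \<psi>1'" and s2: "is_solution V lam \<psi>2 \<psi>2'"
    and "\<psi>1 u = \<psi>2 u" "\<psi>1' u = \<psi>2' u"
  shows "\<psi>1 x = \<psi>2 x \<and> \<psi>1' x = \<psi>2' x"
proof -
  define \<delta> \<delta>' where "\<delta> y = \<psi>1 y - \<psi>2 y" and "\<delta>' y = \<psi>1' y - \<psi>2' y" for y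
  have s: "is_solution V lam \<delta> \<delta>'"
    unfolding \<delta>_def[abs_def] \<delta>'_def[abs_def] by (rule is_solution_diff[OF s1 s2])
  obtain \<phi> \<phi>' where \<phi>: "is_solution V lam \<phi> \<phi>'" "\<phi> x = 0" "\<phi>' x = 1"
    using solution_exists by blast
  obtain \<theta> \<theta>' where \<theta>: "is_solution V lam \<theta> \<theta>'" "\<theta> x = 1" "\<theta>' x = 0"
    using solution_exists by blast
  have "\<delta> u = 0" "\<delta>' u = 0"
    using assms by (auto simp: \<delta>_def \<delta>'_def)
  then have "\<delta> x = 0" "\<delta>' x = 0"
    using wronskian_eq[OF s \<phi>(1), of x u] wronskian_eq[OF s \<theta>(1), of x u] \<phi> \<theta> by simp_all
  then show ?thesis
    by (simp add: \<delta>_def \<delta>'_def)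
qed

lemma sol_s_eqI:
  assumes "is_solution V lam \<psi> \<psi>'" "\<psi> u = 0" "\<psi>' u = 1"
  shows "sol_s V lam u = \<psi>"
  unfolding sol_s_def
proof (rule the_equality)
  fix \<phi> assume "\<exists>\<phi>'. is_solution V lam \<phi> \<phi>' \<and> \<phi> u = 0 \<and> \<phi>' u = 1"
  then show "\<phi> = \<psi>"
    using solution_unique[OF _ assms(1), of \<phi> _ u] assms by fastforce
qed (use assms in blast)

lemma sol_c_eqI:
  assumes "is_solution V lam \<psi> \<psi>'" "\<psi> u = 1" "\<psi>' u = 0"
  shows "sol_c V lam u = \<psi>"
  unfolding sol_c_def
proof (rule the_equality)
  fix \<phi> assume "\<exists>\<phi>'. is_solution V lam \<phi> \<phi>' \<and> \<phi> u = 1 \<and> \<phi>' u = 0"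
  then show "\<phi> = \<psi>"
    using solution_unique[OF _ assms(1), of \<phi> _ u] assms by fastforce
qed (use assms in blast)

lemma sol_c'_eqI:
  assumes "is_solution V lam \<psi> \<psi>'" "\<psi> u = 1" "\<psi>' u = 0"
  shows "sol_c' V lam u x = \<psi>' x"
  using assms(1) unfolding sol_c'_def sol_c_eqI[OF assms] is_solution_def
  by (auto intro: vector_derivative_at)

lemma is_solution_sol_s:
  obtains \<psi>' where "is_solution V lam (sol_s V lam u) \<psi>'" "sol_s V lam u u = 0" "\<psi>' u = 1"
  using solution_exists[of lam u 0 1] sol_s_eqI by metis

lemma is_solution_sol_c:
  obtains \<psi>' where "is_solution V lam (sol_c V lam u) \<psi>'" "sol_c V lam u u = 1" "\<psi>' u = 0"
    "sol_c' V lam u = \<psi>'"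
  using solution_exists[of lam u 1 0] sol_c_eqI sol_c'_eqI by (metis ext)

section \<open>Reflection symmetry\<close>

lemma sol_s_swap: "sol_s V lam a b = - sol_s V lam b a"
proof -
  obtain \<psi>a' \<psi>b' where "is_solution V lam (sol_s V lam a) \<psi>a'" "sol_s V lam a a = 0" "\<psi>a' a = 1"
    and "is_solution V lam (sol_s V lam b) \<psi>b'" "sol_s V lam b b = 0" "\<psi>b' b = 1"
    using is_solution_sol_s by metis
  then show ?thesis
    using wronskian_eq[of lam "sol_s V lam a" \<psi>a' "sol_s V lam b" \<psi>b' b a] by simp
qed

lemma sol_c'_swap: "sol_c' V lam a b = - sol_c' V lam b a"
proof -
  obtain \<psi>a' \<psi>b' where "is_solution V lam (sol_c V lam a) \<psi>a'" "sol_c V lam a a = 1" "\<psi>a' a = 0"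
    "sol_c' V lam a = \<psi>a'"
    and "is_solution V lam (sol_c V lam b) \<psi>b'" "sol_c V lam b b = 1" "\<psi>b' b = 0"
    "sol_c' V lam b = \<psi>b'"
    using is_solution_sol_c by metis
  then have "- \<psi>a' b = \<psi>b' a"
    using wronskian_eq[of lam "sol_c V lam a" \<psi>a' "sol_c V lam b" \<psi>b' b a] by simp
  then show ?thesis
    using \<open>sol_c' V lam a = \<psi>a'\<close> \<open>sol_c' V lam b = \<psi>b'\<close> by (metis minus_minus)
qed

lemma is_solution_reflect_cnj:
  assumes s: "is_solution V lam \<psi> \<psi>'" and sym: "\<And>t. cnj (V (c - t)) = V t"
  shows "is_solution V (cnj lam) (\<lambda>x. cnj (\<psi> (c - x))) (\<lambda>x. - cnj (\<psi>' (c - x)))"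
  unfolding is_solution_def
proof (intro conjI allI impI)
  fix x
  have "((\<lambda>x. c - x) has_vector_derivative -1) (at x)"
    by (auto intro!: derivative_eq_intros)
  moreover have "(\<psi> has_vector_derivative \<psi>' (c - x)) (at (c - x))"
    using s unfolding is_solution_def by blast
  ultimately have "((\<psi> \<circ> (\<lambda>x. c - x)) has_vector_derivative (-1::real) *\<^sub>R \<psi>' (c - x)) (at x)"
    by (rule vector_diff_chain_at)
  then have "((\<lambda>x. cnj (\<psi> (c - x))) has_vector_derivative cnj (- \<psi>' (c - x))) (at x)"
    by (intro has_vector_derivative_cnj) (simp add: o_def)
  then show "((\<lambda>x. cnj (\<psi> (c - x))) has_vector_derivative - cnj (\<psi>' (c - x))) (at x)"
    by simp
next
  fix a b :: real assume "a \<le> b"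
  define F where "F s = cnj ((V s - lam) * \<psi> s)" for s
  have "(F has_integral cnj (\<psi>' (c - a) - \<psi>' (c - b))) {c - b..c - a}"
    using has_integral_cnj solution_derivative_has_integral[OF s, of "c - b" "c - a"] \<open>a \<le> b\<close>
    unfolding F_def[abs_def] o_def by force
  then have "((\<lambda>x. F (- x)) has_integral cnj (\<psi>' (c - a) - \<psi>' (c - b))) {a - c..b - c}"
    using has_integral_reflect_real[of F _ "c - a" "c - b"] by simp
  then have "((\<lambda>x. F (c - x)) has_integral cnj (\<psi>' (c - a) - \<psi>' (c - b))) {a..b}"
    using has_integral_shift_real_ivl[of "\<lambda>x. F (- x)" _ "a - c" "b - c" "- c"] by simp
  moreover have "F (c - t) = (V t - cnj lam) * cnj (\<psi> (c - t))" for t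
    unfolding F_def using sym[of t] by simp
  ultimately show "((\<lambda>t. (V t - cnj lam) * cnj (\<psi> (c - t))) has_integral
      - cnj (\<psi>' (c - b)) - - cnj (\<psi>' (c - a))) {a..b}"
    by simp
qed

lemma sol_s_reflect:
  assumes sym: "\<And>t. cnj (V (c - t)) = V t"
  shows "sol_s V lam (c - b) (c - a) = cnj (sol_s V (cnj lam) a b)"
proof -
  obtain \<psi>' where s: "is_solution V (cnj lam) (sol_s V (cnj lam) a) \<psi>'"
    "sol_s V (cnj lam) a a = 0" "\<psi>' a = 1"
    using is_solution_sol_s by metis
  have "sol_s V lam (c - a) = (\<lambda>x. - cnj (sol_s V (cnj lam) a (c - x)))"
    by (rule sol_s_eqI[OF is_solution_minus[OF is_solution_reflect_cnj[OF s(1) sym, simplified]]])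
      (use s in simp_all)
  then show ?thesis
    by (simp add: sol_s_swap[of lam "c - b"])
qed

lemma sol_c'_reflect:
  assumes sym: "\<And>t. cnj (V (c - t)) = V t"
  shows "sol_c' V lam (c - b) (c - a) = cnj (sol_c' V (cnj lam) a b)"
proof -
  obtain \<psi>' where s: "is_solution V (cnj lam) (sol_c V (cnj lam) a) \<psi>'"
    "sol_c V (cnj lam) a a = 1" "\<psi>' a = 0" "sol_c' V (cnj lam) a = \<psi>'"
    using is_solution_sol_c by metis
  have "sol_c' V lam (c - a) (c - b) = - cnj (\<psi>' b)"
    using s by (intro sol_c'_eqI[OF is_solution_reflect_cnj[OF s(1) sym, simplified], THEN trans]) auto
  then show ?thesis
    using s(4) by (simp add: sol_c'_swap[of lam "c - b"])
qed

end

theorem theorem4p2: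
  fixes V :: "real \<Rightarrow> complex" and x0 :: real
  assumes loc_int: "\<And>a b. V absolutely_integrable_on {a..b}"
    and periodic: "\<And>x. V (x + pi) = V x"
    and symm: "\<And>x. cnj (V (- x)) = V x"
    and x0: "x0 \<in> {0..pi}"
  shows "(\<forall>mu. dirichlet_enum V x0 mu \<longrightarrow>
            (\<exists>mu'. dirichlet_enum V (pi - x0) mu' \<and> (\<forall>j\<ge>1. cnj (mu' j) = mu j)))
       \<and> (\<forall>nu. neumann_enum V x0 nu \<longrightarrow>
            (\<exists>nu'. neumann_enum V (pi - x0) nu' \<and> (\<forall>k. cnj (nu' k) = nu k)))"
proof -
  \<comment> \<open>the identities hold for every \<open>x0\<close>\<close>
  interpret locally_integrable_potential V
    by unfold_locales (rule loc_int)
  have sym: "cnj (V (2 * pi - t)) = V t" for t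
    using symm[of "t - 2 * pi"] periodic[of "t - 2 * pi"] periodic[of "t - pi"] by (simp add: algebra_simps)
  have dirichlet: "(\<lambda>lam. sol_s V lam (pi - x0) (pi - x0 + pi))
      = (\<lambda>lam. cnj (sol_s V (cnj lam) x0 (x0 + pi)))"
    and neumann: "(\<lambda>lam. sol_c' V lam (pi - x0) (pi - x0 + pi))
      = (\<lambda>lam. cnj (sol_c' V (cnj lam) x0 (x0 + pi)))"
    using sol_s_reflect[OF sym, where a = x0 and b = "x0 + pi"]
      sol_c'_reflect[OF sym, where a = x0 and b = "x0 + pi"] by simp_all
  show ?thesis
  proof (intro conjI allI impI)
    fix mu assume "dirichlet_enum V x0 mu"
    then have "zero_enum (\<lambda>lam. sol_s V lam (pi - x0) (pi - x0 + pi)) 1 (\<lambda>j. cnj (mu j))"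
      unfolding dirichlet_enum_def dirichlet by (rule zero_enum_cnj)
    then show "\<exists>mu'. dirichlet_enum V (pi - x0) mu' \<and> (\<forall>j\<ge>1. cnj (mu' j) = mu j)"
      unfolding dirichlet_enum_def by auto
  next
    fix nu assume "neumann_enum V x0 nu"
    then have "zero_enum (\<lambda>lam. sol_c' V lam (pi - x0) (pi - x0 + pi)) 0 (\<lambda>k. cnj (nu k))"
      unfolding neumann_enum_def neumann by (rule zero_enum_cnj)
    then show "\<exists>nu'. neumann_enum V (pi - x0) nu' \<and> (\<forall>k. cnj (nu' k) = nu k)"
      unfolding neumann_enum_def by auto
  qed
qed

end
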